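(* Assume $\rho$ satisfies the Loss Kernel Assumption, let $\zeta\ge\xi\ge0$, let $X^{(k)}\in\mathcal X$, let $G(\cdot\mid X^{(k)})$ be as defined below (with parameter $\xi$), and define $$H(X\mid X^{(k)})=\sum_{\alpha\in\mathcal A}\sum_{(i,j)\in\vec{\mathcal E}^{\alpha\alpha}}E^{\alpha\alpha}_{ij}(X\mid X^{(k)})+\sum_{\alpha\ne\beta}\sum_{(i,j)\in\vec{\mathcal E}^{\alpha\beta}}E^{\alpha\beta}_{ij}(X\mid X^{(k)})+\tfrac{\zeta}{2}\|X-X^{(k)}\|^2 .$$ Then there exist PSD matrices $\Pi^{\alpha(k)}_i\in\mathbb R^{(d+1)\times(d+1)}$ ($\alpha\in\mathcal A$, $1\le i\le n_\alpha$), with $\Pi^{\alpha(k)}=\mathrm{diag}(\Pi^{\alpha(k)}_1,\dots,\Pi^{\alpha(k)}_{n_\alpha})$ (acting so that $\|X^\alpha\|^2_{\Pi^{\alpha(k)}}=\sum_i\|X^\alpha_i\|^2_{\Pi^{\alpha(k)}_i}$) and $\Pi^{(k)}=\mathrm{diag}(\Pi^{1(k)},\dots,\Pi^{|\mathcal A|(k)})$, such that: (a) $H(X\mid X^{(k)})=\sum_\alpha H^\alpha(X^\alpha\mid X^{(k)})+F(X^{(k)})$ and $H^\alpha(X^\alpha\mid X^{(k)})=\sum_{i=1}^{n_\alpha}H^\alpha_i(X^\alpha_i\mid X^{(k)})$, where $H^\alpha(X^\alpha\mid X^{(k)})=\frac12\|X^\alpha-X^{\alpha(k)}\|^2_{\Pi^{\alpha(k)}}+\langle\nabla_{X^\alpha}F(X^{(k)}),X^\alpha-X^{\alpha(k)}\rangle$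 and $H^\alpha_i(X^\alpha_i\mid X^{(k)})=\frac12\|X^\alpha_i-X^{\alpha(k)}_i\|^2_{\Pi^{\alpha(k)}_i}+\langle\nabla_{X^\alpha_i}F(X^{(k)}),X^\alpha_i-X^{\alpha(k)}_i\rangle$; (b) $H(X\mid X^{(k)})=\frac12\|X-X^{(k)}\|^2_{\Pi^{(k)}}+\langle\nabla F(X^{(k)}),X-X^{(k)}\rangle+F(X^{(k)})$, and $H(X\mid X^{(k)})\ge G(X\mid X^{(k)})\ge F(X)$ for all $X$, with equalities if $X=X^{(k)}$; (c) $\Pi^{(k)}\succeq\Gamma^{(k)}\succeq M^{(k)}$, where $\Gamma^{(k)}=\mathrm{diag}(\Gamma^{1(k)},\dots,\Gamma^{|\mathcal A|(k)})$ is the block-diagonal matrix of the quadratic part of $G$ defined below; (d) there is a constant PSD matrix $\Pi$, independent of $X^{(k)}$, with $\Pi\succeq\Pi^{(k)}$ for every $X^{(k)}\in\mathcal X$; (e) $H^\alpha(X^\alpha\mid X^{(k)})\ge G^\alpha(X^\alpha\mid X^{(k)})$ for all $X^\alpha$, with equality if $X^\alpha=X^{\alpha(k)}$.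
   Context: Setup. Fix an integer $d\ge 2$, a finite set of nodes $\mathcal A=\{1,\dots,|\mathcal A|\}$, positive integers $n_\alpha$ ($\alpha\in\mathcal A$) and $n=\sum_{\alpha}n_\alpha$. An element $X\in\mathbb R^{d\times(d+1)n}$ is written $X=[X^1\ \cdots\ X^{|\mathcal A|}]$ with $X^\alpha=[t^\alpha\ R^\alpha]\in\mathbb R^{d\times(d+1)n_\alpha}$, where $t^\alpha=[t^\alpha_1\ \cdots\ t^\alpha_{n_\alpha}]$ with $t^\alpha_i\in\mathbb R^d$ and $R^\alpha=[R^\alpha_1\ \cdots\ R^\alpha_{n_\alpha}]$ with $R^\alpha_i\in\mathbb R^{d\times d}$; write $X^\alpha_i=[t^\alpha_i\ R^\alpha_i]\in\mathbb R^{d\times(d+1)}$. The feasible set is $\mathcal X=\{X:\ R^\alpha_i\in SO(d)\ \forall\alpha,i\}$; $X^{(k)}=[X^{1(k)}\ \cdots\ X^{|\mathcal A|(k)}]$. We use $\langle A,B\rangle=\mathrm{tr}(AB^\top)$, $\|\cdot\|$ the Frobenius norm, and for PSD $M$, $\|Y\|_M^2=\mathrm{tr}(YMY^\top)$. Data: for each ordered pair $(\alpha,\beta)\in\mathcal A\times\mathcal A$ (including $\alpha=\beta$) a finite set $\vec{\mathcal E}^{\alpha\beta}\subseteq\{1,\dots,n_\alpha\}\times\{1,\dots,n_\beta\}$, and for each $(i,j)\in\vec{\mathcal E}^{\alpha\beta}$ a rotation $\tilde R^{\alpha\beta}_{ij}\in SO(d)$, a vector $\tilde t^{\alpha\beta}_{ij}\in\mathbb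 R^d$ and weights $\kappa^{\alpha\beta}_{ij},\tau^{\alpha\beta}_{ij}\ge0$. For $(i,j)\in\vec{\mathcal E}^{\alpha\beta}$ define the quadratic form on $\mathbb R^{d\times(d+1)n}$ $$q^{\alpha\beta}_{ij}(X)=\kappa^{\alpha\beta}_{ij}\|R^\alpha_i\tilde R^{\alpha\beta}_{ij}-R^\beta_j\|^2+\tau^{\alpha\beta}_{ij}\|R^\alpha_i\tilde t^{\alpha\beta}_{ij}+t^\alpha_i-t^\beta_j\|^2 .$$ Loss Kernel Assumption: $\rho:\mathbb R^+\to\mathbb R$ ($\mathbb R^+=[0,\infty)$) satisfies (a) $\rho(s)\ge0$ with equality iff $s=0$; (b) $\rho$ is continuously differentiable on $\mathbb R^+$; (c) $\rho$ is concave; (d) $0\le\rho'(s)\le1$ for all $s\ge0$ and $\rho'(0)=1$; (e) $\varphi(X)=\rho(\|X\|^2)$ has Lipschitz continuous gradient on $\mathbb R^{m\times n}$. Define $F^{\alpha\alpha}_{ij}(X)=\frac12q^{\alpha\alpha}_{ij}(X)$ for $(i,j)\in\vec{\mathcal E}^{\alpha\alpha}$ and $F^{\alpha\beta}_{ij}(X)=\frac12\rho\big(q^{\alpha\beta}_{ij}(X)\big)$ for $\alpha\ne\beta$, $(i,j)\in\vec{\mathcal E}^{\alpha\beta}$ (defined on all of $\mathbb R^{d\times(d+1)n}$), and the objective $$F(X)=\sum_{\alpha\in\mathcal A}\sum_{(i,j)\in\vec{\mathcal E}^{\alpha\alpha}}F^{\alpha\alpha}_{ij}(X)+\sum_{\alpha\ne\beta}\sum_{(i,j)\in\vec{\mathcal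 E}^{\alpha\beta}}F^{\alpha\beta}_{ij}(X).$$ $\nabla$ denotes the Euclidean gradient and $\nabla_{X^\alpha}$, $\nabla_{X^\alpha_i}$ partial gradients. Weights: $\omega^{\alpha\beta(k)}_{ij}=1$ if $\alpha=\beta$ and $\omega^{\alpha\beta(k)}_{ij}=\rho'\big(q^{\alpha\beta}_{ij}(X^{(k)})\big)$ if $\alpha\neq\beta$. Decoupled quadratic form: for $(i,j)\in\vec{\mathcal E}^{\alpha\beta}$, $$p^{\alpha\beta}_{ij}(X)=2\Big(\kappa^{\alpha\beta}_{ij}\|R^\alpha_i\|^2+\kappa^{\alpha\beta}_{ij}\|R^\beta_j\|^2+\tau^{\alpha\beta}_{ij}\|R^\alpha_i\tilde t^{\alpha\beta}_{ij}+t^\alpha_i\|^2+\tau^{\alpha\beta}_{ij}\|t^\beta_j\|^2\Big),$$ and $E^{\alpha\beta}_{ij}(X\mid X^{(k)})=\tfrac12\omega^{\alpha\beta(k)}_{ij}\,p^{\alpha\beta}_{ij}(X-X^{(k)})+\langle\nabla F^{\alpha\beta}_{ij}(X^{(k)}),X-X^{(k)}\rangle+F^{\alpha\beta}_{ij}(X^{(k)})$ (for $\alpha=\beta$ as well). $G(X\mid X^{(k)})=\sum_{\alpha}\sum_{\vec{\mathcal E}^{\alpha\alpha}}F^{\alpha\alpha}_{ij}(X)+\sum_{\alpha\ne\beta}\sum_{\vec{\mathcal E}^{\alpha\beta}}E^{\alpha\beta}_{ij}(X\mid X^{(k)})+\frac\xi2\|X-X^{(k)}\|^2$; its quadratic part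 is block diagonal, i.e. $G(X\mid X^{(k)})=\sum_\alpha G^\alpha(X^\alpha\mid X^{(k)})+F(X^{(k)})$ with $G^\alpha(X^\alpha\mid X^{(k)})=\frac12\|X^\alpha-X^{\alpha(k)}\|^2_{\Gamma^{\alpha(k)}}+\langle\nabla_{X^\alpha}F(X^{(k)}),X^\alpha-X^{\alpha(k)}\rangle$ for PSD $\Gamma^{\alpha(k)}$. The PSD matrix $M^{(k)}$ is defined by $\|Y\|^2_{M^{(k)}}=\sum_{\alpha}\sum_{\vec{\mathcal E}^{\alpha\alpha}}q^{\alpha\alpha}_{ij}(Y)+\sum_{\alpha\ne\beta}\sum_{\vec{\mathcal E}^{\alpha\beta}}\omega^{\alpha\beta(k)}_{ij}q^{\alpha\beta}_{ij}(Y)$. *)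

theory Defs
  imports "HOL-Analysis.Analysis"
begin

text \<open>Poses are indexed by a finite type 'b; node b is the node alpha
  the pose belongs to (so the poses of node alpha are X^alpha_1..X^alpha_{n_alpha}).
  A block X^alpha_i = [t R] (a d x (d+1) matrix) is an element of real^('d option)^'d:
  column None is t, column Some c is column c of R.  The whole X is real^('d option)^'d^'b
  (its inner product / norm is the Frobenius one).\<close>

definition tcol :: "real^('d::finite) option^'d \<Rightarrow> real^'d" where
  "tcol Y = (\<chi> r. Y$r$None)"

definition rotp :: "real^('d::finite) option^'d \<Rightarrow> real^'d^'d" where
  "rotp Y = (\<chi> r c. Y$r$(Some c))"

definition feasible :: "real^('d::finite) option^'d^('b::finite) \<Rightarrow> bool" where
  "feasible X \<longleftrightarrow> (\<forall>b. rotation_matrix (rotp (X$b)))"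

definition qf :: "('b \<Rightarrow> 'b \<Rightarrow> real) \<Rightarrow> ('b \<Rightarrow> 'b \<Rightarrow> real) \<Rightarrow> ('b \<Rightarrow> 'b \<Rightarrow> real^'d^'d)
     \<Rightarrow> ('b \<Rightarrow> 'b \<Rightarrow> real^'d) \<Rightarrow> 'b \<times> 'b \<Rightarrow> real^('d::finite) option^'d^('b::finite) \<Rightarrow> real" where
  "qf \<kappa> \<tau> Rt tt e X =
     \<kappa> (fst e) (snd e) * (norm (rotp (X$fst e) ** Rt (fst e) (snd e) - rotp (X$snd e)))\<^sup>2
   + \<tau> (fst e) (snd e) * (norm (rotp (X$fst e) *v tt (fst e) (snd e) + tcol (X$fst e) - tcol (X$snd e)))\<^sup>2"

definition intra :: "('b \<Rightarrow> 'a) \<Rightarrow> 'b \<times> 'b \<Rightarrow> bool" where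
  "intra node e \<longleftrightarrow> node (fst e) = node (snd e)"

definition Fe :: "('b \<Rightarrow> 'a) \<Rightarrow> (real \<Rightarrow> real) \<Rightarrow> ('b \<Rightarrow> 'b \<Rightarrow> real) \<Rightarrow> ('b \<Rightarrow> 'b \<Rightarrow> real)
     \<Rightarrow> ('b \<Rightarrow> 'b \<Rightarrow> real^'d^'d) \<Rightarrow> ('b \<Rightarrow> 'b \<Rightarrow> real^'d) \<Rightarrow> 'b \<times> 'b
     \<Rightarrow> real^('d::finite) option^'d^('b::finite) \<Rightarrow> real" where
  "Fe node \<rho> \<kappa> \<tau> Rt tt e X =
     (if intra node e then qf \<kappa> \<tau> Rt tt e X / 2 else \<rho> (qf \<kappa> \<tau> Rt tt e X) / 2)"

definition Fobj where
  "Fobj node \<rho> \<kappa> \<tau> Rt tt Ed X = (\<Sum>e\<in>Ed. Fe node \<rho> \<kappa> \<tau> Rt tt e X)"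

definition grad :: "('v::real_inner \<Rightarrow> real) \<Rightarrow> 'v \<Rightarrow> 'v" where
  "grad f x = (THE g. (f has_derivative (\<lambda>h. g \<bullet> h)) (at x))"

definition omega where
  "omega node \<rho>' \<kappa> \<tau> Rt tt e Xk = (if intra node e then 1 else \<rho>' (qf \<kappa> \<tau> Rt tt e Xk))"

definition pf :: "('b \<Rightarrow> 'b \<Rightarrow> real) \<Rightarrow> ('b \<Rightarrow> 'b \<Rightarrow> real) \<Rightarrow> ('b \<Rightarrow> 'b \<Rightarrow> real^'d)
     \<Rightarrow> 'b \<times> 'b \<Rightarrow> real^('d::finite) option^'d^('b::finite) \<Rightarrow> real" where
  "pf \<kappa> \<tau> tt e X = 2 * (
       \<kappa> (fst e) (snd e) * (norm (rotp (X$fst e)))\<^sup>2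
     + \<kappa> (fst e) (snd e) * (norm (rotp (X$snd e)))\<^sup>2
     + \<tau> (fst e) (snd e) * (norm (rotp (X$fst e) *v tt (fst e) (snd e) + tcol (X$fst e)))\<^sup>2
     + \<tau> (fst e) (snd e) * (norm (tcol (X$snd e)))\<^sup>2)"

definition Ef where
  "Ef node \<rho> \<rho>' \<kappa> \<tau> Rt tt e X Xk =
     omega node \<rho>' \<kappa> \<tau> Rt tt e Xk * pf \<kappa> \<tau> tt e (X - Xk) / 2
   + grad (Fe node \<rho> \<kappa> \<tau> Rt tt e) Xk \<bullet> (X - Xk)
   + Fe node \<rho> \<kappa> \<tau> Rt tt e Xk"

definition Gf where
  "Gf node \<rho> \<rho>' \<kappa> \<tau> Rt tt Ed \<xi> X Xk =
     (\<Sum>e\<in>{e\<in>Ed. intra node e}. Fe node \<rho> \<kappa> \<tau> Rt tt e X)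
   + (\<Sum>e\<in>{e\<in>Ed. \<not> intra node e}. Ef node \<rho> \<rho>' \<kappa> \<tau> Rt tt e X Xk)
   + \<xi> / 2 * (norm (X - Xk))\<^sup>2"

definition Hf where
  "Hf node \<rho> \<rho>' \<kappa> \<tau> Rt tt Ed \<zeta> X Xk =
     (\<Sum>e\<in>Ed. Ef node \<rho> \<rho>' \<kappa> \<tau> Rt tt e X Xk) + \<zeta> / 2 * (norm (X - Xk))\<^sup>2"

definition Mform where
  "Mform node \<rho>' \<kappa> \<tau> Rt tt Ed Xk Y =
     (\<Sum>e\<in>{e\<in>Ed. intra node e}. qf \<kappa> \<tau> Rt tt e Y)
   + (\<Sum>e\<in>{e\<in>Ed. \<not> intra node e}. omega node \<rho>' \<kappa> \<tau> Rt tt e Xk * qf \<kappa> \<tau> Rt tt e Y)"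

text \<open>X as a d x (d+1)n matrix (columns indexed by pose and column-within-block).\<close>
definition flat :: "real^('c::finite)^('r::finite)^('b::finite) \<Rightarrow> real^('b \<times> 'c)^'r" where
  "flat X = (\<chi> r. \<chi> p. X$(fst p)$r$(snd p))"

definition qnorm2 :: "real^'c^'c \<Rightarrow> real^('c::finite)^('r::finite) \<Rightarrow> real" where
  "qnorm2 P Y = trace (Y ** P ** transpose Y)"

definition psd :: "real^('n::finite)^'n \<Rightarrow> bool" where
  "psd P \<longleftrightarrow> transpose P = P \<and> (\<forall>v. 0 \<le> v \<bullet> (P *v v))"

definition loewner_ge :: "real^('n::finite)^'n \<Rightarrow> real^'n^'n \<Rightarrow> bool" where
  "loewner_ge A B \<longleftrightarrow> psd (A - B)"

definition blockdiag :: "('b::finite \<Rightarrow> real^('c::finite)^'c) \<Rightarrow> real^('b \<times> 'c)^('b \<times> 'c)" where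
  "blockdiag P = (\<chi> p q. if fst p = fst q then P (fst p) $ snd p $ snd q else 0)"

definition node_blockdiag :: "('b::finite \<Rightarrow> 'a) \<Rightarrow> real^('b \<times> 'c::finite)^('b \<times> 'c) \<Rightarrow> bool" where
  "node_blockdiag node P \<longleftrightarrow> (\<forall>p q. node (fst p) \<noteq> node (fst q) \<longrightarrow> P$p$q = 0)"

definition restr :: "('b \<Rightarrow> 'a) \<Rightarrow> 'a \<Rightarrow> 'v::zero^('b::finite) \<Rightarrow> 'v^'b" where
  "restr node \<alpha> Y = (\<chi> b. if node b = \<alpha> then Y$b else 0)"

text \<open>Loss Kernel Assumption; \<rho>' is the derivative of \<rho>.  Item (e) is imposed on the
  space in which X lives.\<close>
definition loss_kernel :: "(real \<Rightarrow> real) \<Rightarrow> (real \<Rightarrow> real) \<Rightarrow> 'v::euclidean_space itself \<Rightarrow> bool" where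
  "loss_kernel \<rho> \<rho>' TYPE_V \<longleftrightarrow>
     (\<forall>s\<ge>0. 0 \<le> \<rho> s \<and> (\<rho> s = 0 \<longleftrightarrow> s = 0))
   \<and> (\<forall>s\<ge>0. (\<rho> has_real_derivative \<rho>' s) (at s within {0..})) \<and> continuous_on {0..} \<rho>'
   \<and> concave_on {0..} \<rho>
   \<and> (\<forall>s\<ge>0. 0 \<le> \<rho>' s \<and> \<rho>' s \<le> 1) \<and> \<rho>' 0 = 1
   \<and> (\<exists>g L. (\<forall>x::'v. ((\<lambda>y. \<rho> ((norm y)\<^sup>2)) has_derivative (\<lambda>h. g x \<bullet> h)) (at x))
            \<and> (\<forall>x y::'v. norm (g x - g y) \<le> L * norm (x - y)))"

end

theory Submission imports Defs begin

text \<open>Every edge term F_e is majorised at X^(k) by a quadratic in X - X^(k) with the same value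
  and gradient.  For an intra-node edge F_e is itself quadratic; for an inter-node edge concavity
  of \<rho> gives \<rho>(q(X)) \<le> \<rho>(q(X^(k))) + \<rho>'(q(X^(k))) (q(X) - q(X^(k))).  Moreover q \<le> p, because
  ||a - b||^2 \<le> 2||a||^2 + 2||b||^2 and right multiplication by a rotation preserves the Frobenius
  norm.  As p couples each pose only with itself, the quadratic part of H is block diagonal with
  blocks \<Sum>_e \<omega>_e P_e + \<zeta> I, and 0 \<le> \<omega>_e \<le> 1 lets one replace \<omega>_e by 1 to get a bound
  independent of X^(k).  All Loewner inequalities are checked on the quadratic forms ||.||^2_P.\<close>

section \<open>Quadratic forms of matrices\<close>

lemma qnorm2_expand:
  "qnorm2 P Z = (\<Sum>r\<in>UNIV. \<Sum>p\<in>UNIV. \<Sum>q\<in>UNIV. Z$r$p * P$p$q * Z$r$q)"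
  unfolding qnorm2_def trace_def matrix_matrix_mult_def transpose_def
  by (simp add: sum_distrib_right mult.assoc) (subst sum.swap, simp)

lemma qnorm2_add: "qnorm2 (A + B) Z = qnorm2 A Z + qnorm2 B Z"
  by (simp add: qnorm2_expand algebra_simps sum.distrib)

lemma qnorm2_diff: "qnorm2 (A - B) Z = qnorm2 A Z - qnorm2 B Z"
  by (simp add: qnorm2_expand algebra_simps sum_subtractf)

lemma qnorm2_scaleR: "qnorm2 (c *\<^sub>R A) Z = c * qnorm2 A Z"
  by (simp add: qnorm2_expand algebra_simps sum_distrib_left)

lemma qnorm2_zero_matrix [simp]: "qnorm2 0 Z = 0"
  by (simp add: qnorm2_expand)

lemma qnorm2_zero [simp]: "qnorm2 P 0 = 0"
  by (simp add: qnorm2_expand)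

lemma qnorm2_if_zero: "qnorm2 (if c then A else 0) Z = (if c then qnorm2 A Z else 0)"
  by simp

lemma qnorm2_sum: "qnorm2 (\<Sum>i\<in>I. A i) Z = (\<Sum>i\<in>I. qnorm2 (A i) Z)"
  by (induction I rule: infinite_finite_induct) (auto simp: qnorm2_add)

definition outer :: "real^'n \<Rightarrow> real^('n::finite)^'n" where
  "outer w = (\<chi> p q. w$p * w$q)"

lemma qnorm2_outer: "qnorm2 (outer w) Z = (norm (Z *v w))\<^sup>2"
  unfolding qnorm2_expand power2_norm_eq_inner inner_vec_def outer_def matrix_vector_mult_def
  by (simp add: sum_product algebra_simps)

lemma qnorm2_mat_1: "qnorm2 (mat 1) Z = (norm Z)\<^sup>2"
proof -
  have "\<And>r p q. Z$r$p * (mat 1 :: real^'a^'a)$p$q * Z$r$q = (if p = q then Z$r$p * Z$r$q else 0)"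
    by (simp add: mat_def)
  then show ?thesis
    unfolding qnorm2_expand power2_norm_eq_inner inner_vec_def by simp
qed

lemma sum_UNIV_prod:
  "sum f (UNIV :: ('a::finite \<times> 'c::finite) set) = (\<Sum>a\<in>UNIV. \<Sum>c\<in>UNIV. f (a, c))"
  using sum.cartesian_product[of "\<lambda>a c. f (a, c)" UNIV UNIV] by (simp add: UNIV_Times_UNIV)

lemma qnorm2_blockdiag:
  fixes Y :: "real^('c::finite)^('r::finite)^('b::finite)"
  shows "qnorm2 (blockdiag P) (flat Y) = (\<Sum>b\<in>UNIV. qnorm2 (P b) (Y$b))"
proof -
  have "qnorm2 (blockdiag P) (flat Y) =
     (\<Sum>r\<in>UNIV. \<Sum>b\<in>UNIV. \<Sum>c\<in>UNIV. \<Sum>b'\<in>UNIV. \<Sum>c'\<in>UNIV.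
        (if b' = b then Y$b$r$c * P b $c$c' * Y$b$r$c' else 0))"
    unfolding qnorm2_expand sum_UNIV_prod flat_def blockdiag_def
    by (auto intro!: sum.cong)
  also have "\<dots> = (\<Sum>r\<in>UNIV. \<Sum>b\<in>UNIV. \<Sum>c\<in>UNIV. \<Sum>c'\<in>UNIV. Y$b$r$c * P b $c$c' * Y$b$r$c')"
    by (subst sum.swap[where A = UNIV and B = "UNIV :: 'c set"]) simp
  also have "\<dots> = (\<Sum>b\<in>UNIV. qnorm2 (P b) (Y$b))"
    unfolding qnorm2_expand by (rule sum.swap)
  finally show ?thesis .
qed

lemma qnorm2_blockdiag_restr:
  fixes Y :: "real^('c::finite)^('r::finite)^('b::finite)"
  shows "qnorm2 (blockdiag P) (flat (restr node \<alpha> Y)) = (\<Sum>b\<in>{b. node b = \<alpha>}. qnorm2 (P b) (Y$b))"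
  unfolding qnorm2_blockdiag by (simp add: restr_def if_distrib sum.If_cases cong: if_cong)

lemma inner_restr:
  "restr node \<alpha> g \<bullet> Y = (\<Sum>b\<in>{b. node b = \<alpha>}. g$b \<bullet> Y$b)"
  by (simp add: restr_def inner_vec_def if_distrib[of "\<lambda>x. x \<bullet> _"] sum.If_cases cong: if_cong)

lemma blockdiag_form_restr:
  "qnorm2 (blockdiag P) (flat (restr node \<alpha> (X - Xk))) / 2 + restr node \<alpha> g \<bullet> (X - Xk)
     = (\<Sum>b\<in>{b. node b = \<alpha>}. qnorm2 (P b) (X$b - Xk$b) / 2 + g$b \<bullet> (X$b - Xk$b))"
  unfolding qnorm2_blockdiag_restr inner_restr by (simp add: sum.distrib sum_divide_distrib)

lemma blockdiag_form_sum_restr: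
  fixes node :: "'b::finite \<Rightarrow> 'a::finite"
  shows "(\<Sum>\<alpha>\<in>UNIV. qnorm2 (blockdiag P) (flat (restr node \<alpha> (X - Xk))) / 2 + restr node \<alpha> g \<bullet> (X - Xk))
     = qnorm2 (blockdiag P) (flat (X - Xk)) / 2 + g \<bullet> (X - Xk)"
proof -
  let ?h = "\<lambda>b. qnorm2 (P b) (X$b - Xk$b) / 2 + g$b \<bullet> (X$b - Xk$b)"
  have "(\<Sum>\<alpha>\<in>UNIV. sum ?h {b. node b = \<alpha>}) = sum ?h UNIV"
    using sum.group[of UNIV UNIV node ?h] by simp
  also have "\<dots> = qnorm2 (blockdiag P) (flat (X - Xk)) / 2 + g \<bullet> (X - Xk)"
    by (simp add: qnorm2_blockdiag inner_vec_def sum.distrib sum_divide_distrib)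
  finally show ?thesis
    unfolding blockdiag_form_restr .
qed

lemma restr_diff_eq_0:
  "\<forall>b. node b = \<alpha> \<longrightarrow> X$b = Xk$b \<Longrightarrow> restr node \<alpha> (X - Xk) = (0 :: 'v::ab_group_add^'b::finite)"
  by (simp add: restr_def vec_eq_iff)

lemma flat_0 [simp]: "flat 0 = 0"
  by (simp add: flat_def vec_eq_iff)

lemma linear_transpose: "linear (transpose :: real^'n^'m \<Rightarrow> real^('m::finite)^('n::finite))"
  by (rule linearI) (simp_all add: transpose_def vec_eq_iff)

lemmas transpose_add = linear_add[OF linear_transpose]
  and transpose_diff = linear_diff[OF linear_transpose]
  and transpose_sum = linear_sum[OF linear_transpose]
  and transpose_zero = linear_0[OF linear_transpose]

lemma transpose_outer: "transpose (outer w) = outer w"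
  by (simp add: transpose_def outer_def vec_eq_iff)

lemma transpose_blockdiag:
  "(\<And>b. transpose (P b) = P b) \<Longrightarrow> transpose (blockdiag P) = blockdiag P"
  by (simp add: transpose_def blockdiag_def vec_eq_iff)

lemma psd_qnorm2I:
  fixes P :: "real^('n::finite)^'n"
  assumes "transpose P = P" and "\<And>Z :: real^'n^('r::finite). 0 \<le> qnorm2 P Z"
  shows "psd P"
  unfolding psd_def
proof (intro conjI allI)
  show "transpose P = P" by fact
  fix v :: "real^'n"
  obtain r0 :: 'r where True by blast
  define Z :: "real^'n^'r" where "Z = (\<chi> r. if r = r0 then v else 0)"
  have "(\<Sum>p\<in>UNIV. \<Sum>q\<in>UNIV. Z$r$p * P$p$q * Z$r$q)
       = (if r = r0 then (\<Sum>p\<in>UNIV. \<Sum>q\<in>UNIV. v$p * P$p$q * v$q) else 0)" for r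
    by (simp add: Z_def)
  then have "qnorm2 P Z = v \<bullet> (P *v v)"
    unfolding qnorm2_expand inner_vec_def matrix_vector_mult_def
    by (simp add: sum_distrib_left mult.assoc)
  then show "0 \<le> v \<bullet> (P *v v)" using assms(2)[of Z] by simp
qed

lemma flat_surj: "\<exists>Y. Z = flat Y"
  by (rule exI[of _ "\<chi> b r c. Z$r$(b, c)"]) (simp add: flat_def vec_eq_iff)

lemma psd_flatI:
  fixes A :: "real^('b::finite \<times> 'c::finite)^('b \<times> 'c)"
  assumes "transpose A = A" and "\<And>Y :: real^'c^('r::finite)^'b. 0 \<le> qnorm2 A (flat Y)"
  shows "psd A"
proof (rule psd_qnorm2I[where 'r = 'r])
  fix Z :: "real^('b \<times> 'c)^'r"
  obtain Y where "Z = flat Y" using flat_surj by blast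
  then show "0 \<le> qnorm2 A Z" using assms(2)[of Y] by simp
qed fact

lemma loewner_ge_flatI:
  fixes A B :: "real^('b::finite \<times> 'c::finite)^('b \<times> 'c)"
  assumes "transpose A = A" "transpose B = B"
    and "\<And>Y :: real^'c^('r::finite)^'b. qnorm2 B (flat Y) \<le> qnorm2 A (flat Y)"
  shows "loewner_ge A B"
  unfolding loewner_ge_def
  by (rule psd_flatI[where 'r = 'r]) (use assms in \<open>simp_all add: transpose_diff qnorm2_diff\<close>)

lemma node_blockdiag_add:
  "node_blockdiag node A \<Longrightarrow> node_blockdiag node B \<Longrightarrow> node_blockdiag node (A + B)"
  by (simp add: node_blockdiag_def)

lemma node_blockdiag_sum:
  "(\<And>i. i \<in> I \<Longrightarrow> node_blockdiag node (A i)) \<Longrightarrow> node_blockdiag node (\<Sum>i\<in>I. A i)"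
  by (simp add: node_blockdiag_def sum_component)

lemma node_blockdiag_blockdiag: "node_blockdiag node (blockdiag P)"
  by (auto simp: node_blockdiag_def blockdiag_def)

section \<open>Euclidean gradients\<close>

lemma grad_eqI:
  fixes f :: "'v::euclidean_space \<Rightarrow> real"
  assumes "(f has_derivative (\<lambda>h. g \<bullet> h)) (at x)"
  shows "grad f x = g"
  unfolding grad_def
proof (rule the_equality)
  fix g' assume "(f has_derivative (\<lambda>h. g' \<bullet> h)) (at x)"
  from has_derivative_unique[OF this assms] have "g' \<bullet> h = g \<bullet> h" for h
    by (rule fun_cong)
  from this[of "g' - g"] have "(g' - g) \<bullet> (g' - g) = 0" by (simp add: inner_diff_left)
  then show "g' = g" by simp
qed fact

lemma grad_inner:
  fixes f :: "'v::euclidean_space \<Rightarrow> real"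
  assumes "(f has_derivative D) (at x)"
  shows "grad f x \<bullet> h = D h"
proof -
  define g where "g = (\<Sum>i\<in>Basis. D i *\<^sub>R i)"
  have lin: "linear D" using assms by (rule has_derivative_linear)
  have repr: "D = (\<lambda>h. g \<bullet> h)"
  proof
    fix h
    have "D h = D (\<Sum>i\<in>Basis. (h \<bullet> i) *\<^sub>R i)" by (simp only: euclidean_representation)
    also have "\<dots> = (\<Sum>i\<in>Basis. (h \<bullet> i) * D i)"
      using lin by (simp add: linear_sum linear_scale)
    also have "\<dots> = g \<bullet> h"
      by (simp add: g_def inner_sum_right mult.commute inner_commute)
    finally show "D h = g \<bullet> h" .
  qed
  have "grad f x = g" using assms unfolding repr by (rule grad_eqI)
  then show ?thesis by (simp add: repr)
qed

section \<open>Edge residuals\<close>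

definition rot_residual :: "('b \<Rightarrow> 'b \<Rightarrow> real^'d^'d) \<Rightarrow> 'b \<times> 'b
    \<Rightarrow> real^('d::finite) option^'d^('b::finite) \<Rightarrow> real^'d^'d" where
  "rot_residual Rt e X = rotp (X$fst e) ** Rt (fst e) (snd e) - rotp (X$snd e)"

definition trans_residual :: "('b \<Rightarrow> 'b \<Rightarrow> real^'d) \<Rightarrow> 'b \<times> 'b
    \<Rightarrow> real^('d::finite) option^'d^('b::finite) \<Rightarrow> real^'d" where
  "trans_residual tt e X = rotp (X$fst e) *v tt (fst e) (snd e) + tcol (X$fst e) - tcol (X$snd e)"

lemma qf_residuals:
  "qf \<kappa> \<tau> Rt tt e X = \<kappa> (fst e) (snd e) * (norm (rot_residual Rt e X))\<^sup>2
                     + \<tau> (fst e) (snd e) * (norm (trans_residual tt e X))\<^sup>2"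
  by (simp add: qf_def rot_residual_def trans_residual_def)

lemma linear_rot_residual: "linear (rot_residual Rt e)"
  by (rule linearI) (simp_all add: rot_residual_def rotp_def matrix_matrix_mult_def vec_eq_iff
      algebra_simps sum.distrib sum_distrib_left)

lemma linear_trans_residual: "linear (trans_residual tt e)"
  by (rule linearI) (simp_all add: trans_residual_def rotp_def tcol_def matrix_vector_mult_def
      vec_eq_iff algebra_simps sum.distrib sum_distrib_left)

lemma has_derivative_norm_sq_linear:
  fixes L :: "'v::euclidean_space \<Rightarrow> 'w::real_inner"
  assumes "linear L"
  shows "((\<lambda>X. (norm (L X))\<^sup>2) has_derivative (\<lambda>h. 2 * (L X \<bullet> L h))) (at X)"
proof -
  have bl: "bounded_linear L" using assms by (simp add: linear_conv_bounded_linear)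
  have "((\<lambda>X. L X \<bullet> L X) has_derivative (\<lambda>h. L X \<bullet> L h + L h \<bullet> L X)) (at X)"
    by (rule has_derivative_inner) (rule bounded_linear_imp_has_derivative[OF bl])+
  then show ?thesis unfolding power2_norm_eq_inner
    by (rule has_derivative_eq_rhs) (auto simp: inner_commute fun_eq_iff)
qed

lemma norm_sq_linear_add:
  "linear L \<Longrightarrow> (norm (L (X + Y)))\<^sup>2 = (norm (L X))\<^sup>2 + 2 * (L X \<bullet> L Y) + (norm (L Y))\<^sup>2"
  by (simp add: linear_add power2_norm_eq_inner inner_add inner_commute)

definition qf_deriv where
  "qf_deriv \<kappa> \<tau> Rt tt e X h =
     2 * \<kappa> (fst e) (snd e) * (rot_residual Rt e X \<bullet> rot_residual Rt e h)
   + 2 * \<tau> (fst e) (snd e) * (trans_residual tt e X \<bullet> trans_residual tt e h)"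

lemma has_derivative_qf: "(qf \<kappa> \<tau> Rt tt e has_derivative qf_deriv \<kappa> \<tau> Rt tt e X) (at X)"
proof -
  have "((\<lambda>X. \<kappa> (fst e) (snd e) * (norm (rot_residual Rt e X))\<^sup>2
             + \<tau> (fst e) (snd e) * (norm (trans_residual tt e X))\<^sup>2) has_derivative
         (\<lambda>h. \<kappa> (fst e) (snd e) * (2 * (rot_residual Rt e X \<bullet> rot_residual Rt e h))
             + \<tau> (fst e) (snd e) * (2 * (trans_residual tt e X \<bullet> trans_residual tt e h)))) (at X)"
    by (intro has_derivative_add has_derivative_mult_right has_derivative_norm_sq_linear
        linear_rot_residual linear_trans_residual)
  then show ?thesis unfolding qf_residuals[abs_def] qf_deriv_def
    by (rule has_derivative_eq_rhs) (simp add: fun_eq_iff)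
qed

lemma qf_add:
  "qf \<kappa> \<tau> Rt tt e (X + Y) = qf \<kappa> \<tau> Rt tt e X + qf_deriv \<kappa> \<tau> Rt tt e X Y + qf \<kappa> \<tau> Rt tt e Y"
  unfolding qf_residuals qf_deriv_def norm_sq_linear_add[OF linear_rot_residual]
    norm_sq_linear_add[OF linear_trans_residual]
  by (simp add: algebra_simps)

lemma qf_nonneg: "0 \<le> \<kappa> (fst e) (snd e) \<Longrightarrow> 0 \<le> \<tau> (fst e) (snd e) \<Longrightarrow> 0 \<le> qf \<kappa> \<tau> Rt tt e X"
  unfolding qf_residuals by simp

lemma pf_nonneg: "0 \<le> \<kappa> (fst e) (snd e) \<Longrightarrow> 0 \<le> \<tau> (fst e) (snd e) \<Longrightarrow> 0 \<le> pf \<kappa> \<tau> tt e Y"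
  unfolding pf_def by simp

lemma norm_diff_sq_le: "(norm (u - v))\<^sup>2 \<le> 2 * (norm u)\<^sup>2 + 2 * (norm (v :: 'a::real_normed_vector))\<^sup>2"
proof -
  have "(norm (u - v))\<^sup>2 \<le> (norm u + norm v)\<^sup>2"
    by (intro power_mono norm_triangle_ineq4) simp
  also have "\<dots> \<le> 2 * (norm u)\<^sup>2 + 2 * (norm v)\<^sup>2"
    using sum_squares_ge_zero[of "norm u - norm v" 0] by (simp add: power2_eq_square algebra_simps)
  finally show ?thesis .
qed

lemma norm_matrix_mult_orthogonal:
  fixes A :: "real^('n::finite)^('m::finite)"
  assumes "orthogonal_matrix R"
  shows "norm (A ** R) = norm A"
proof -
  have sq: "(norm B)\<^sup>2 = trace (B ** transpose B)" for B :: "real^'n^'m"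
    unfolding power2_norm_eq_inner inner_vec_def trace_def matrix_matrix_mult_def transpose_def
    by simp
  have "(norm (A ** R))\<^sup>2 = (norm A)\<^sup>2"
    unfolding sq matrix_transpose_mul using assms
    by (simp add: matrix_mul_assoc[symmetric] orthogonal_matrix_def) (simp add: matrix_mul_assoc)
  then show ?thesis by simp
qed

lemma qf_le_pf:
  assumes R: "rotation_matrix (Rt (fst e) (snd e))"
    and k: "0 \<le> \<kappa> (fst e) (snd e)" and t: "0 \<le> \<tau> (fst e) (snd e)"
  shows "qf \<kappa> \<tau> Rt tt e Y \<le> pf \<kappa> \<tau> tt e Y"
proof -
  have o: "orthogonal_matrix (Rt (fst e) (snd e))" using R by (simp add: rotation_matrix_def)
  have rot: "(norm (rot_residual Rt e Y))\<^sup>2 \<le> 2 * (norm (rotp (Y$fst e)))\<^sup>2 + 2 * (norm (rotp (Y$snd e)))\<^sup>2"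
    using norm_diff_sq_le[of "rotp (Y$fst e) ** Rt (fst e) (snd e)" "rotp (Y$snd e)"]
    unfolding rot_residual_def norm_matrix_mult_orthogonal[OF o] .
  have trans: "(norm (trans_residual tt e Y))\<^sup>2 \<le> 2 * (norm (rotp (Y$fst e) *v tt (fst e) (snd e) + tcol (Y$fst e)))\<^sup>2
             + 2 * (norm (tcol (Y$snd e)))\<^sup>2"
    using norm_diff_sq_le[of "rotp (Y$fst e) *v tt (fst e) (snd e) + tcol (Y$fst e)" "tcol (Y$snd e)"]
    unfolding trans_residual_def .
  show ?thesis
    unfolding qf_residuals pf_def
    using mult_left_mono[OF rot k] mult_left_mono[OF trans t] by (simp add: algebra_simps)
qed

section \<open>Matrices of the edge forms\<close>

text \<open>A pose block Z = [t R] acts on the augmented vector (1, v) as R v + t, and on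
  (0, column c of R') as column c of R R'.\<close>

definition aug_vec :: "real^'d \<Rightarrow> real^('d::finite) option" where
  "aug_vec v = (\<chi> c. case c of None \<Rightarrow> 1 | Some c0 \<Rightarrow> v$c0)"

definition rot_col_vec :: "real^'d^'d \<Rightarrow> 'd \<Rightarrow> real^('d::finite) option" where
  "rot_col_vec R c' = (\<chi> c. case c of None \<Rightarrow> 0 | Some c0 \<Rightarrow> R$c0$c')"

definition block_vec :: "'b \<Rightarrow> real^'c \<Rightarrow> real^(('b::finite) \<times> ('c::finite))" where
  "block_vec b u = (\<chi> p. if fst p = b then u$(snd p) else 0)"

lemma sum_UNIV_option: "sum f (UNIV :: ('a::finite) option set) = f None + (\<Sum>a\<in>UNIV. f (Some a))"
  by (simp add: UNIV_option_conv sum.reindex)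

lemma norm_sq_columns:
  "(norm (A :: real^('c::finite)^('r::finite)))\<^sup>2 = (\<Sum>c\<in>UNIV. (norm (column c A))\<^sup>2)"
  unfolding power2_norm_eq_inner inner_vec_def column_def
  by (simp add: sum.swap[of _ "UNIV :: 'r set"])

lemma column_rotp: "column c (rotp Z) = Z *v axis (Some c) 1"
  by (simp add: column_def rotp_def matrix_vector_mult_def axis_def vec_eq_iff if_distrib cong: if_cong)

lemma tcol_eq_mult_axis: "tcol Z = Z *v axis None 1"
  by (simp add: tcol_def matrix_vector_mult_def axis_def vec_eq_iff if_distrib cong: if_cong)

lemma rotp_mult_add_tcol: "rotp Z *v v + tcol Z = Z *v aug_vec v"
  by (simp add: tcol_def rotp_def aug_vec_def matrix_vector_mult_def vec_eq_iff sum_UNIV_option)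

lemma column_rotp_mult: "column c (rotp Z ** R) = Z *v rot_col_vec R c"
  by (simp add: column_def rotp_def rot_col_vec_def matrix_vector_mult_def matrix_matrix_mult_def
      vec_eq_iff sum_UNIV_option)

lemma flat_mult_block_vec: "flat Y *v block_vec b u = Y$b *v u"
proof -
  have "(\<Sum>a\<in>UNIV. \<Sum>c\<in>UNIV. Y$a$r$c * (if a = b then u$c else 0)) = (\<Sum>c\<in>UNIV. Y$b$r$c * u$c)" for r
    by (subst sum.swap) (simp add: if_distrib[of "\<lambda>x. _ * x"] cong: if_cong)
  then show ?thesis
    unfolding flat_def block_vec_def matrix_vector_mult_def sum_UNIV_prod
    by (simp add: vec_eq_iff) (smt (verit) snd_conv sum.cong)
qed

definition rot_proj :: "real^('d::finite) option^'d option" where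
  "rot_proj = (\<Sum>c\<in>UNIV. outer (axis (Some c) 1))"

definition pf_block :: "('b \<Rightarrow> 'b \<Rightarrow> real) \<Rightarrow> ('b \<Rightarrow> 'b \<Rightarrow> real) \<Rightarrow> ('b \<Rightarrow> 'b \<Rightarrow> real^'d)
     \<Rightarrow> 'b \<times> 'b \<Rightarrow> 'b \<Rightarrow> real^('d::finite) option^'d option" where
  "pf_block \<kappa> \<tau> tt e b =
     (if b = fst e then (2 * \<kappa> (fst e) (snd e)) *\<^sub>R rot_proj
        + (2 * \<tau> (fst e) (snd e)) *\<^sub>R outer (aug_vec (tt (fst e) (snd e))) else 0)
   + (if b = snd e then (2 * \<kappa> (fst e) (snd e)) *\<^sub>R rot_proj
        + (2 * \<tau> (fst e) (snd e)) *\<^sub>R outer (axis None 1) else 0)"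

lemma qnorm2_rot_proj: "qnorm2 rot_proj Z = (norm (rotp Z))\<^sup>2"
  unfolding rot_proj_def qnorm2_sum qnorm2_outer norm_sq_columns[of "rotp Z"] column_rotp ..

lemma pf_eq_pf_block:
  "pf \<kappa> \<tau> tt e (Y :: real^('d::finite) option^'d^('b::finite)) = (\<Sum>b\<in>UNIV. qnorm2 (pf_block \<kappa> \<tau> tt e b) (Y$b))"
  unfolding pf_block_def qnorm2_add qnorm2_if_zero qnorm2_scaleR qnorm2_rot_proj qnorm2_outer
    rotp_mult_add_tcol[symmetric] tcol_eq_mult_axis[symmetric] sum.distrib
  by (simp add: pf_def algebra_simps)

lemma qnorm2_pf_block_nonneg:
  "0 \<le> \<kappa> (fst e) (snd e) \<Longrightarrow> 0 \<le> \<tau> (fst e) (snd e)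
    \<Longrightarrow> 0 \<le> qnorm2 (pf_block \<kappa> \<tau> tt e b) (Z :: real^('d::finite) option^'d)"
  unfolding pf_block_def by (simp add: qnorm2_add qnorm2_if_zero qnorm2_scaleR qnorm2_rot_proj qnorm2_outer)

lemma transpose_pf_block: "transpose (pf_block \<kappa> \<tau> tt e b) = pf_block \<kappa> \<tau> tt e b"
  unfolding pf_block_def rot_proj_def
  by (simp add: transpose_add transpose_scalar transpose_sum transpose_outer transpose_zero)

lemma qnorm2_weighted_pf_blocks:
  "qnorm2 (blockdiag (\<lambda>b. (\<Sum>e\<in>A. c e *\<^sub>R pf_block \<kappa> \<tau> tt e b) + z *\<^sub>R mat 1)) (flat Y)
     = (\<Sum>e\<in>A. c e * pf \<kappa> \<tau> tt e Y) + z * (norm Y)\<^sup>2"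
proof -
  have "qnorm2 (blockdiag (\<lambda>b. (\<Sum>e\<in>A. c e *\<^sub>R pf_block \<kappa> \<tau> tt e b) + z *\<^sub>R mat 1)) (flat Y)
     = (\<Sum>e\<in>A. \<Sum>b\<in>UNIV. c e * qnorm2 (pf_block \<kappa> \<tau> tt e b) (Y$b)) + (\<Sum>b\<in>UNIV. z * (norm (Y$b))\<^sup>2)"
    unfolding qnorm2_blockdiag qnorm2_add qnorm2_sum qnorm2_scaleR qnorm2_mat_1 sum.distrib
    by (simp only: sum.swap[of _ UNIV A])
  also have "\<dots> = (\<Sum>e\<in>A. c e * pf \<kappa> \<tau> tt e Y) + z * (norm Y)\<^sup>2"
    by (simp add: pf_eq_pf_block sum_distrib_left power2_norm_eq_inner inner_vec_def)
  finally show ?thesis .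
qed

lemma transpose_weighted_pf_blocks:
  "transpose (blockdiag (\<lambda>b. (\<Sum>e\<in>A. c e *\<^sub>R pf_block \<kappa> \<tau> tt e b) + z *\<^sub>R mat 1))
     = blockdiag (\<lambda>b. (\<Sum>e\<in>A. c e *\<^sub>R pf_block \<kappa> \<tau> tt e b) + z *\<^sub>R mat 1)"
  by (intro transpose_blockdiag)
     (simp add: transpose_add transpose_sum transpose_scalar transpose_pf_block)

definition rot_residual_vec :: "('b \<Rightarrow> 'b \<Rightarrow> real^'d^'d) \<Rightarrow> 'b \<times> 'b \<Rightarrow> 'd
    \<Rightarrow> real^(('b::finite) \<times> ('d::finite) option)" where
  "rot_residual_vec Rt e c =
     block_vec (fst e) (rot_col_vec (Rt (fst e) (snd e)) c) - block_vec (snd e) (axis (Some c) 1)"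

definition trans_residual_vec :: "('b \<Rightarrow> 'b \<Rightarrow> real^'d) \<Rightarrow> 'b \<times> 'b
    \<Rightarrow> real^(('b::finite) \<times> ('d::finite) option)" where
  "trans_residual_vec tt e =
     block_vec (fst e) (aug_vec (tt (fst e) (snd e))) - block_vec (snd e) (axis None 1)"

definition qf_matrix where
  "qf_matrix \<kappa> \<tau> Rt tt e =
     \<kappa> (fst e) (snd e) *\<^sub>R (\<Sum>c\<in>UNIV. outer (rot_residual_vec Rt e c))
   + \<tau> (fst e) (snd e) *\<^sub>R outer (trans_residual_vec tt e)"

lemma column_diff: "column c (A - B) = column c A - column c B"
  by (simp add: column_def vec_eq_iff)

lemma column_rot_residual: "column c (rot_residual Rt e Y) = flat Y *v rot_residual_vec Rt e c"
  unfolding rot_residual_def rot_residual_vec_def column_diff column_rotp_mult column_rotp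
    matrix_vector_mult_diff_distrib flat_mult_block_vec ..

lemma trans_residual_flat: "trans_residual tt e Y = flat Y *v trans_residual_vec tt e"
  unfolding trans_residual_def trans_residual_vec_def matrix_vector_mult_diff_distrib
    flat_mult_block_vec rotp_mult_add_tcol
  unfolding tcol_eq_mult_axis ..

lemma qnorm2_qf_matrix: "qnorm2 (qf_matrix \<kappa> \<tau> Rt tt e) (flat Y) = qf \<kappa> \<tau> Rt tt e Y"
  unfolding qf_matrix_def qf_residuals qnorm2_add qnorm2_scaleR qnorm2_sum qnorm2_outer
    norm_sq_columns[of "rot_residual Rt e Y"] column_rot_residual trans_residual_flat ..

lemma transpose_qf_matrix: "transpose (qf_matrix \<kappa> \<tau> Rt tt e) = qf_matrix \<kappa> \<tau> Rt tt e"
  unfolding qf_matrix_def by (simp add: transpose_add transpose_scalar transpose_sum transpose_outer)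

lemma node_blockdiag_qf_matrix:
  fixes node :: "'b::finite \<Rightarrow> 'a" and Rt :: "'b \<Rightarrow> 'b \<Rightarrow> real^('d::finite)^'d"
  assumes "intra node e"
  shows "node_blockdiag node (qf_matrix \<kappa> \<tau> Rt tt e)"
  unfolding node_blockdiag_def
proof (intro allI impI)
  fix p q :: "'b \<times> 'd option" assume "node (fst p) \<noteq> node (fst q)"
  then have "fst p \<noteq> fst e \<and> fst p \<noteq> snd e \<or> fst q \<noteq> fst e \<and> fst q \<noteq> snd e"
    using assms unfolding intra_def by metis
  then have "outer (block_vec (fst e) u - block_vec (snd e) v) $ p $ q = 0" for u v
    by (auto simp: outer_def block_vec_def)
  then show "qf_matrix \<kappa> \<tau> Rt tt e $ p $ q = 0"
    by (simp add: qf_matrix_def rot_residual_vec_def trans_residual_vec_def sum_component)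
qed

section \<open>The majorisers of the pose-graph objective\<close>

locale pose_graph_majorization =
  fixes node :: "'b::finite \<Rightarrow> 'a::finite"
    and Ed :: "('b \<times> 'b) set"
    and \<kappa> \<tau> :: "'b \<Rightarrow> 'b \<Rightarrow> real"
    and Rt :: "'b \<Rightarrow> 'b \<Rightarrow> real^'d^'d"
    and tt :: "'b \<Rightarrow> 'b \<Rightarrow> real^('d::finite)"
    and \<rho> \<rho>' :: "real \<Rightarrow> real"
    and \<xi> \<zeta> :: real
  assumes edge_data: "\<forall>e\<in>Ed. rotation_matrix (Rt (fst e) (snd e)) \<and> 0 \<le> \<kappa> (fst e) (snd e) \<and> 0 \<le> \<tau> (fst e) (snd e)"
    and rho_deriv: "\<And>s. 0 \<le> s \<Longrightarrow> (\<rho> has_real_derivative \<rho>' s) (at s within {0..})"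
    and rho_concave: "concave_on {0..} \<rho>"
    and rho'_bounds: "\<And>s. 0 \<le> s \<Longrightarrow> 0 \<le> \<rho>' s \<and> \<rho>' s \<le> 1"
    and rho'_0: "\<rho>' 0 = 1"
    and xi_nonneg: "0 \<le> \<xi>"
    and xi_le_zeta: "\<xi> \<le> \<zeta>"
begin

abbreviation "q e \<equiv> qf \<kappa> \<tau> Rt tt e"
abbreviation "p e \<equiv> pf \<kappa> \<tau> tt e"
abbreviation "f e \<equiv> Fe node \<rho> \<kappa> \<tau> Rt tt e"
abbreviation "w e \<equiv> omega node \<rho>' \<kappa> \<tau> Rt tt e"
abbreviation "F \<equiv> Fobj node \<rho> \<kappa> \<tau> Rt tt Ed"
abbreviation "intra_edges \<equiv> {e\<in>Ed. intra node e}"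
abbreviation "inter_edges \<equiv> {e\<in>Ed. \<not> intra node e}"

lemma sum_edges_split: "sum g Ed = sum g intra_edges + sum g inter_edges"
  by (subst sum.union_disjoint[symmetric]) (auto intro: arg_cong[where f = "sum g"])

lemma q_nonneg: "e \<in> Ed \<Longrightarrow> 0 \<le> q e Y"
  using edge_data by (simp add: qf_nonneg)

lemma p_nonneg: "e \<in> Ed \<Longrightarrow> 0 \<le> p e Y"
  using edge_data by (simp add: pf_nonneg)

lemma q_le_p: "e \<in> Ed \<Longrightarrow> q e Y \<le> p e Y"
  using edge_data by (simp add: qf_le_pf)

lemma w_nonneg: "e \<in> Ed \<Longrightarrow> 0 \<le> w e X"
  using rho'_bounds q_nonneg by (simp add: omega_def)

lemma w_le_1: "e \<in> Ed \<Longrightarrow> w e X \<le> 1"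
  using rho'_bounds q_nonneg by (simp add: omega_def)

lemma w_intra: "intra node e \<Longrightarrow> w e X = 1"
  by (simp add: omega_def)

text \<open>At s = 0 there is no interior tangent; there \<rho>' \<le> 1 = \<rho>'(0) and the mean value
  theorem do the job.\<close>

lemma rho_le_tangent:
  assumes s: "0 \<le> s" and t: "0 \<le> t"
  shows "\<rho> t \<le> \<rho> s + \<rho>' s * (t - s)"
proof (cases "s = 0")
  case True
  show ?thesis
  proof (cases "t = 0")
    case False
    with t have "0 < t" by simp
    have "\<exists>x\<in>{0<..<t}. \<rho> t - \<rho> 0 = \<rho>' x * (t - 0)"
    proof (rule mvt_simple[OF \<open>0 < t\<close>])
      fix x assume "0 \<le> x" "x \<le> t"
      then show "(\<rho> has_derivative (\<lambda>h. \<rho>' x * h)) (at x within {0..t})"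
        using rho_deriv[of x] unfolding has_field_derivative_def
        by (auto intro: has_derivative_subset)
    qed
    then obtain x where "0 < x" "\<rho> t - \<rho> 0 = \<rho>' x * t" by auto
    moreover have "\<rho>' x * t \<le> t" using rho'_bounds[of x] \<open>0 < x\<close> t by (simp add: mult_left_le_one_le)
    ultimately show ?thesis using True rho'_0 by simp
  qed (use True in simp)
next
  case False
  with s have "0 < s" by simp
  have "convex_on {0..} (\<lambda>x. - \<rho> x)" using rho_concave by (simp add: concave_on_def)
  then have "- \<rho>' s * (t - s) \<le> - \<rho> t - - \<rho> s"
    using \<open>0 < s\<close> t rho_deriv[of s]
    by (intro convex_on_imp_above_tangent Deriv.field_differentiable_minus) auto
  then show ?thesis by simp
qed

lemma has_derivative_f:
  assumes "e \<in> Ed"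
  shows "(f e has_derivative (\<lambda>h. w e X * qf_deriv \<kappa> \<tau> Rt tt e X h / 2)) (at X)"
proof (cases "intra node e")
  case True
  have "((\<lambda>X. q e X / 2) has_derivative (\<lambda>h. qf_deriv \<kappa> \<tau> Rt tt e X h / 2)) (at X)"
    by (rule bounded_linear.has_derivative[OF bounded_linear_divide has_derivative_qf])
  then show ?thesis using True by (simp add: Fe_def[abs_def] omega_def)
next
  case False
  have "((\<lambda>X. \<rho> (q e X)) has_derivative (\<lambda>h. \<rho>' (q e X) * qf_deriv \<kappa> \<tau> Rt tt e X h)) (at X within UNIV)"
  proof (rule has_derivative_in_compose2[of "{0..}" \<rho> "\<lambda>s. (*) (\<rho>' s)"])
    show "\<And>x. x \<in> {0..} \<Longrightarrow> (\<rho> has_derivative (*) (\<rho>' x)) (at x within {0..})"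
      using rho_deriv unfolding has_field_derivative_def by simp
    show "q e ` UNIV \<subseteq> {0..}" using q_nonneg[OF assms] by auto
  qed (auto intro: has_derivative_qf)
  then have "((\<lambda>X. \<rho> (q e X) / 2) has_derivative (\<lambda>h. \<rho>' (q e X) * qf_deriv \<kappa> \<tau> Rt tt e X h / 2)) (at X)"
    by (rule bounded_linear.has_derivative[OF bounded_linear_divide, rotated])
  then show ?thesis using False by (simp add: Fe_def[abs_def] omega_def)
qed

lemma grad_f_inner: "e \<in> Ed \<Longrightarrow> grad (f e) X \<bullet> h = w e X * qf_deriv \<kappa> \<tau> Rt tt e X h / 2"
  by (rule grad_inner[OF has_derivative_f])

lemma grad_F: "grad F X = (\<Sum>e\<in>Ed. grad (f e) X)"
proof (rule grad_eqI)
  have "((\<lambda>X. \<Sum>e\<in>Ed. f e X) has_derivative (\<lambda>h. \<Sum>e\<in>Ed. grad (f e) X \<bullet> h)) (at X)"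
    by (intro has_derivative_sum has_derivative_eq_rhs[OF has_derivative_f]) (auto simp: grad_f_inner)
  then show "(F has_derivative (\<lambda>h. (\<Sum>e\<in>Ed. grad (f e) X) \<bullet> h)) (at X)"
    by (simp add: Fobj_def[abs_def] inner_sum_left)
qed

lemma f_intra_add:
  "e \<in> Ed \<Longrightarrow> intra node e \<Longrightarrow> f e (X + Y) = f e X + grad (f e) X \<bullet> Y + q e Y / 2"
  by (simp add: grad_f_inner Fe_def omega_def qf_add add_divide_distrib)

lemma f_inter_add_le:
  assumes "e \<in> Ed" "\<not> intra node e"
  shows "f e (X + Y) \<le> f e X + grad (f e) X \<bullet> Y + w e X * q e Y / 2"
  using rho_le_tangent[OF q_nonneg[OF assms(1), of X] q_nonneg[OF assms(1), of "X + Y"]] assms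
  by (simp add: grad_f_inner Fe_def omega_def qf_add algebra_simps)

lemma f_le_Ef: "e \<in> Ed \<Longrightarrow> \<not> intra node e \<Longrightarrow> f e X \<le> Ef node \<rho> \<rho>' \<kappa> \<tau> Rt tt e X Xk"
  using f_inter_add_le[of e Xk "X - Xk"] mult_left_mono[OF q_le_p[of e "X - Xk"] w_nonneg[of e Xk]]
  by (simp add: Ef_def)


definition Pi_block :: "real^'d option^'d^'b \<Rightarrow> 'b \<Rightarrow> real^'d option^'d option" where
  "Pi_block Xk b = (\<Sum>e\<in>Ed. w e Xk *\<^sub>R pf_block \<kappa> \<tau> tt e b) + \<zeta> *\<^sub>R mat 1"

definition Pi_bound :: "real^('b \<times> 'd option)^('b \<times> 'd option)" where
  "Pi_bound = blockdiag (\<lambda>b. (\<Sum>e\<in>Ed. pf_block \<kappa> \<tau> tt e b) + \<zeta> *\<^sub>R mat 1)"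

definition Gamma :: "real^'d option^'d^'b \<Rightarrow> real^('b \<times> 'd option)^('b \<times> 'd option)" where
  "Gamma Xk = (\<Sum>e\<in>intra_edges. qf_matrix \<kappa> \<tau> Rt tt e)
     + blockdiag (\<lambda>b. (\<Sum>e\<in>inter_edges. w e Xk *\<^sub>R pf_block \<kappa> \<tau> tt e b) + \<xi> *\<^sub>R mat 1)"

definition M_matrix :: "real^'d option^'d^'b \<Rightarrow> real^('b \<times> 'd option)^('b \<times> 'd option)" where
  "M_matrix Xk = (\<Sum>e\<in>intra_edges. qf_matrix \<kappa> \<tau> Rt tt e)
     + (\<Sum>e\<in>inter_edges. w e Xk *\<^sub>R qf_matrix \<kappa> \<tau> Rt tt e)"

lemma qnorm2_Pi_block:
  "qnorm2 (blockdiag (Pi_block Xk)) (flat (Y :: real^'d option^'d^'b)) = (\<Sum>e\<in>Ed. w e Xk * p e Y) + \<zeta> * (norm Y)\<^sup>2"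
  unfolding Pi_block_def by (rule qnorm2_weighted_pf_blocks)

lemma qnorm2_Pi_bound:
  "qnorm2 Pi_bound (flat (Y :: real^'d option^'d^'b)) = (\<Sum>e\<in>Ed. p e Y) + \<zeta> * (norm Y)\<^sup>2"
  using qnorm2_weighted_pf_blocks[where c = "\<lambda>_. 1" and A = Ed] by (simp add: Pi_bound_def)

lemma qnorm2_Gamma:
  "qnorm2 (Gamma Xk) (flat (Y :: real^'d option^'d^'b))
     = (\<Sum>e\<in>intra_edges. q e Y) + (\<Sum>e\<in>inter_edges. w e Xk * p e Y) + \<xi> * (norm Y)\<^sup>2"
  unfolding Gamma_def qnorm2_add qnorm2_weighted_pf_blocks qnorm2_sum qnorm2_qf_matrix by simp

lemma qnorm2_M_matrix: "qnorm2 (M_matrix Xk) (flat (Y :: real^'d option^'d^'b)) = Mform node \<rho>' \<kappa> \<tau> Rt tt Ed Xk Y"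
  unfolding M_matrix_def Mform_def qnorm2_add qnorm2_sum qnorm2_scaleR qnorm2_qf_matrix ..

lemma transpose_Pi_block: "transpose (Pi_block Xk b) = Pi_block Xk b"
  by (simp add: Pi_block_def transpose_add transpose_sum transpose_scalar transpose_pf_block)

lemma transpose_Pi_bound: "transpose Pi_bound = Pi_bound"
  by (simp add: Pi_bound_def transpose_blockdiag transpose_add transpose_sum transpose_scalar
      transpose_pf_block)

lemma transpose_Gamma: "transpose (Gamma Xk) = Gamma Xk"
  unfolding Gamma_def transpose_add transpose_weighted_pf_blocks transpose_sum transpose_qf_matrix ..

lemma transpose_M_matrix: "transpose (M_matrix Xk) = M_matrix Xk"
  by (simp add: M_matrix_def transpose_add transpose_sum transpose_scalar transpose_qf_matrix)

lemma psd_Pi_block: "psd (Pi_block Xk b)"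
proof (rule psd_qnorm2I[where 'r = 'd, OF transpose_Pi_block])
  fix Z :: "real^'d option^'d"
  show "0 \<le> qnorm2 (Pi_block Xk b) Z"
    unfolding Pi_block_def qnorm2_add qnorm2_sum qnorm2_scaleR qnorm2_mat_1
    using xi_nonneg xi_le_zeta edge_data
    by (intro add_nonneg_nonneg sum_nonneg mult_nonneg_nonneg) (auto simp: w_nonneg qnorm2_pf_block_nonneg)
qed

lemma psd_Pi_bound: "psd Pi_bound"
proof (rule psd_flatI[where 'r = 'd, OF transpose_Pi_bound])
  fix Y :: "real^'d option^'d^'b"
  show "0 \<le> qnorm2 Pi_bound (flat Y)"
    unfolding qnorm2_Pi_bound using xi_nonneg xi_le_zeta
    by (intro add_nonneg_nonneg sum_nonneg mult_nonneg_nonneg) (auto simp: p_nonneg)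
qed

lemma qnorm2_M_matrix_nonneg: "0 \<le> qnorm2 (M_matrix Xk) (flat (Y :: real^'d option^'d^'b))"
  unfolding qnorm2_M_matrix Mform_def
  by (intro add_nonneg_nonneg sum_nonneg mult_nonneg_nonneg) (auto simp: q_nonneg w_nonneg)

lemma qnorm2_M_matrix_le_Gamma:
  "qnorm2 (M_matrix Xk) (flat (Y :: real^'d option^'d^'b)) \<le> qnorm2 (Gamma Xk) (flat Y)"
proof -
  have "(\<Sum>e\<in>inter_edges. w e Xk * q e Y) \<le> (\<Sum>e\<in>inter_edges. w e Xk * p e Y)"
    by (intro sum_mono mult_left_mono) (auto simp: q_le_p w_nonneg)
  moreover have "0 \<le> \<xi> * (norm Y)\<^sup>2" using xi_nonneg by simp
  ultimately show ?thesis
    unfolding qnorm2_M_matrix Mform_def qnorm2_Gamma by linarith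
qed

lemma qnorm2_Gamma_le_Pi_block:
  "qnorm2 (Gamma Xk) (flat (Y :: real^'d option^'d^'b)) \<le> qnorm2 (blockdiag (Pi_block Xk)) (flat Y)"
proof -
  have "(\<Sum>e\<in>intra_edges. q e Y) \<le> (\<Sum>e\<in>intra_edges. w e Xk * p e Y)"
    by (intro sum_mono) (auto simp: w_intra q_le_p)
  moreover have "\<xi> * (norm Y)\<^sup>2 \<le> \<zeta> * (norm Y)\<^sup>2"
    using xi_le_zeta by (intro mult_right_mono) auto
  ultimately show ?thesis
    unfolding qnorm2_Gamma qnorm2_Pi_block sum_edges_split[of "\<lambda>e. w e Xk * p e Y"] by linarith
qed

lemma qnorm2_Pi_block_le_bound:
  "qnorm2 (blockdiag (Pi_block Xk)) (flat (Y :: real^'d option^'d^'b)) \<le> qnorm2 Pi_bound (flat Y)"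
proof -
  have "(\<Sum>e\<in>Ed. w e Xk * p e Y) \<le> (\<Sum>e\<in>Ed. p e Y)"
    by (intro sum_mono mult_left_le_one_le) (auto simp: w_nonneg w_le_1 p_nonneg)
  then show ?thesis unfolding qnorm2_Pi_block qnorm2_Pi_bound by simp
qed

lemma psd_M_matrix: "psd (M_matrix Xk)"
  by (rule psd_flatI[where 'r = 'd, OF transpose_M_matrix qnorm2_M_matrix_nonneg])

lemma psd_Gamma: "psd (Gamma Xk)"
  by (rule psd_flatI[where 'r = 'd, OF transpose_Gamma])
     (rule order_trans[OF qnorm2_M_matrix_nonneg qnorm2_M_matrix_le_Gamma])

lemma node_blockdiag_Gamma: "node_blockdiag node (Gamma Xk)"
  unfolding Gamma_def
  by (intro node_blockdiag_add node_blockdiag_sum node_blockdiag_blockdiag node_blockdiag_qf_matrix) simp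

lemma loewner_ge_Gamma_M_matrix: "loewner_ge (Gamma Xk) (M_matrix Xk)"
  by (rule loewner_ge_flatI[where 'r = 'd, OF transpose_Gamma transpose_M_matrix qnorm2_M_matrix_le_Gamma])

lemma loewner_ge_Pi_block_Gamma: "loewner_ge (blockdiag (Pi_block Xk)) (Gamma Xk)"
  by (rule loewner_ge_flatI[where 'r = 'd, OF transpose_blockdiag[OF transpose_Pi_block]
        transpose_Gamma qnorm2_Gamma_le_Pi_block])

lemma loewner_ge_Pi_bound: "loewner_ge Pi_bound (blockdiag (Pi_block Xk))"
  by (rule loewner_ge_flatI[where 'r = 'd, OF transpose_Pi_bound transpose_blockdiag[OF transpose_Pi_block]
        qnorm2_Pi_block_le_bound])

lemma Hf_eq:
  "Hf node \<rho> \<rho>' \<kappa> \<tau> Rt tt Ed \<zeta> X Xk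
     = qnorm2 (blockdiag (Pi_block Xk)) (flat (X - Xk)) / 2 + grad F Xk \<bullet> (X - Xk) + F Xk"
  unfolding Hf_def Ef_def qnorm2_Pi_block grad_F Fobj_def
  by (simp add: sum.distrib inner_sum_left sum_divide_distrib add_divide_distrib)

lemma Gf_eq:
  "Gf node \<rho> \<rho>' \<kappa> \<tau> Rt tt Ed \<xi> X Xk
     = qnorm2 (Gamma Xk) (flat (X - Xk)) / 2 + grad F Xk \<bullet> (X - Xk) + F Xk"
proof -
  have "(\<Sum>e\<in>intra_edges. f e X)
      = (\<Sum>e\<in>intra_edges. f e Xk + grad (f e) Xk \<bullet> (X - Xk) + q e (X - Xk) / 2)"
    using f_intra_add[of _ Xk "X - Xk"] by (intro sum.cong) auto
  then show ?thesis
    unfolding Gf_def Ef_def qnorm2_Gamma grad_F Fobj_def inner_sum_left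
      sum_edges_split[of "\<lambda>e. f e Xk"] sum_edges_split[of "\<lambda>e. grad (f e) Xk \<bullet> (X - Xk)"]
    by (simp add: sum.distrib sum_divide_distrib add_divide_distrib)
qed

lemma F_le_Gf: "F X \<le> Gf node \<rho> \<rho>' \<kappa> \<tau> Rt tt Ed \<xi> X Xk"
proof -
  have "(\<Sum>e\<in>inter_edges. f e X) \<le> (\<Sum>e\<in>inter_edges. Ef node \<rho> \<rho>' \<kappa> \<tau> Rt tt e X Xk)"
    by (intro sum_mono) (auto simp: f_le_Ef)
  moreover have "0 \<le> \<xi> / 2 * (norm (X - Xk))\<^sup>2" using xi_nonneg by simp
  ultimately show ?thesis
    unfolding Gf_def Fobj_def sum_edges_split[of "\<lambda>e. f e X"] by linarith
qed

lemma Gf_le_Hf: "Gf node \<rho> \<rho>' \<kappa> \<tau> Rt tt Ed \<xi> X Xk \<le> Hf node \<rho> \<rho>' \<kappa> \<tau> Rt tt Ed \<zeta> X Xk"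
  unfolding Gf_eq Hf_eq using qnorm2_Gamma_le_Pi_block by simp

lemma Hf_node_sum:
  "Hf node \<rho> \<rho>' \<kappa> \<tau> Rt tt Ed \<zeta> X Xk
     = (\<Sum>\<alpha>\<in>UNIV. qnorm2 (blockdiag (Pi_block Xk)) (flat (restr node \<alpha> (X - Xk))) / 2
                  + restr node \<alpha> (grad F Xk) \<bullet> (X - Xk)) + F Xk"
  by (simp add: Hf_eq blockdiag_form_sum_restr)

end

theorem proposition4:
  fixes node :: "'b::finite \<Rightarrow> 'a::finite"
    and Ed :: "('b \<times> 'b) set"
    and \<kappa> \<tau> :: "'b \<Rightarrow> 'b \<Rightarrow> real"
    and Rt :: "'b \<Rightarrow> 'b \<Rightarrow> real^'d^'d"
    and tt :: "'b \<Rightarrow> 'b \<Rightarrow> real^('d::finite)"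
    and \<rho> \<rho>' :: "real \<Rightarrow> real"
    and \<xi> \<zeta> :: real
  assumes d2: "CARD('d) \<ge> 2"
    and nodes_nonempty: "surj node"
    and data: "\<forall>e\<in>Ed. rotation_matrix (Rt (fst e) (snd e)) \<and> 0 \<le> \<kappa> (fst e) (snd e) \<and> 0 \<le> \<tau> (fst e) (snd e)"
    and LK: "loss_kernel \<rho> \<rho>' TYPE(real^'d option^'d^'b)"
    and xi: "0 \<le> \<xi>" and zeta: "\<xi> \<le> \<zeta>"
  defines "F \<equiv> Fobj node \<rho> \<kappa> \<tau> Rt tt Ed"
    and "G \<equiv> Gf node \<rho> \<rho>' \<kappa> \<tau> Rt tt Ed \<xi>"
    and "H \<equiv> Hf node \<rho> \<rho>' \<kappa> \<tau> Rt tt Ed \<zeta>"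
  shows "\<exists>PiC::real^('b \<times> 'd option)^('b \<times> 'd option). psd PiC \<and>
    (\<forall>Xk::real^'d option^'d^'b. feasible Xk \<longrightarrow>
     (\<exists>Pik :: 'b \<Rightarrow> real^'d option^'d option.
        (\<forall>b. psd (Pik b)) \<and>
        (let gF = grad F Xk;
             Hi = (\<lambda>b X. qnorm2 (Pik b) (X$b - Xk$b) / 2 + gF$b \<bullet> (X$b - Xk$b));
             Ha = (\<lambda>\<alpha> X. qnorm2 (blockdiag Pik) (flat (restr node \<alpha> (X - Xk))) / 2
                          + restr node \<alpha> gF \<bullet> (X - Xk))
         in
          (\<forall>X. H X Xk = (\<Sum>\<alpha>\<in>UNIV. Ha \<alpha> X) + F Xk) \<and>
          (\<forall>\<alpha> X. Ha \<alpha> X = (\<Sum>b\<in>{b. node b = \<alpha>}. Hi b X)) \<and>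
          (\<forall>X. H X Xk = qnorm2 (blockdiag Pik) (flat (X - Xk)) / 2 + gF \<bullet> (X - Xk) + F Xk) \<and>
          (\<forall>X. H X Xk \<ge> G X Xk \<and> G X Xk \<ge> F X) \<and>
          H Xk Xk = G Xk Xk \<and> G Xk Xk = F Xk \<and>
          (\<exists>\<Gamma> M::real^('b \<times> 'd option)^('b \<times> 'd option).
             psd \<Gamma> \<and> node_blockdiag node \<Gamma> \<and>
             (\<forall>X. G X Xk = qnorm2 \<Gamma> (flat (X - Xk)) / 2 + gF \<bullet> (X - Xk) + F Xk) \<and>
             psd M \<and> (\<forall>Y. qnorm2 M (flat Y) = Mform node \<rho>' \<kappa> \<tau> Rt tt Ed Xk Y) \<and>
             loewner_ge (blockdiag Pik) \<Gamma> \<and> loewner_ge \<Gamma> M \<and>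
             (let Ga = (\<lambda>\<alpha> X. qnorm2 \<Gamma> (flat (restr node \<alpha> (X - Xk))) / 2
                               + restr node \<alpha> gF \<bullet> (X - Xk))
              in (\<forall>\<alpha> X. Ha \<alpha> X \<ge> Ga \<alpha> X) \<and>
                 (\<forall>\<alpha> X. (\<forall>b. node b = \<alpha> \<longrightarrow> X$b = Xk$b) \<longrightarrow> Ha \<alpha> X = Ga \<alpha> X))) \<and>
          loewner_ge PiC (blockdiag Pik))))"
proof -
  interpret PG: pose_graph_majorization node Ed \<kappa> \<tau> Rt tt \<rho> \<rho>' \<xi> \<zeta>
    by (rule pose_graph_majorization.intro) (use data LK xi zeta in \<open>auto simp: loss_kernel_def\<close>)
  have ex2I: "P a b \<Longrightarrow> \<exists>x y. P x y" for P a b by blast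
  show ?thesis
    unfolding F_def G_def H_def Let_def
    apply (intro exI[of _ PG.Pi_bound] conjI allI impI PG.psd_Pi_bound)
    subgoal for Xk
      by (intro exI[of _ "PG.Pi_block Xk"] ex2I[of _ "PG.Gamma Xk" "PG.M_matrix Xk"] conjI allI impI
          PG.psd_Pi_block PG.Hf_node_sum blockdiag_form_restr PG.Hf_eq PG.Gf_le_Hf PG.F_le_Gf
          PG.psd_Gamma PG.node_blockdiag_Gamma PG.Gf_eq PG.psd_M_matrix PG.qnorm2_M_matrix
          PG.loewner_ge_Pi_block_Gamma PG.loewner_ge_Gamma_M_matrix PG.loewner_ge_Pi_bound)
         (simp_all add: PG.Hf_eq PG.Gf_eq PG.qnorm2_Gamma_le_Pi_block restr_diff_eq_0)
    done
qed

end
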